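(* Let $N\ge3$, $N_e\ge 2$, $L\ge1$ be integers, $P>0$, $\tau\in(0,1)$, $\sigma_r>0$, $c_4\in\mathbb{C}\setminus\{0\}$, $\alpha,\beta\in\mathbb{C}$ with $|\alpha|^2+|\beta|^2=1$, $\alpha\ne0$. For $\theta\in(-\pi/2,\pi/2)$ and $\mathbf{h}\in\mathbb{C}^N\setminus\mathrm{span}(\mathbf{a}(\theta))$, let $\tilde{\mathbf{a}}=\mathbf{a}/\|\mathbf{a}\|$, $\tilde{\mathbf{h}}=\frac{\mathbf{h}-(\tilde{\mathbf{a}}^H\mathbf{h})\tilde{\mathbf{a}}}{\|\mathbf{h}-(\tilde{\mathbf{a}}^H\mathbf{h})\tilde{\mathbf{a}}\|}$, $\mathbf{t}_1=\alpha\tilde{\mathbf{a}}+\beta\tilde{\mathbf{h}}$, $\mathbf{t}_3,\dots,\mathbf{t}_N$ an orthonormal basis of the orthogonal complement of $\mathrm{span}\{\tilde{\mathbf{a}},\tilde{\mathbf{h}}\}$, and $\mathbf{R}_x=P\tau\mathbf{t}_1\mathbf{t}_1^H+\frac{(1-\tau)P}{N-2}\sum_{i=3}^N\mathbf{t}_i\mathbf{t}_i^H$. For $\phi\in(-\pi/2,\pi/2)$ define $\mathrm{CRB}(\phi)=\frac{\sigma_r^2}{2|c_4|^2L\|\mathbf{c}'(\phi)\|^2\,\mathbf{a}^H\mathbf{R}_x\mathbf{a}}$. Then $$\mathrm{CRB}(\phi)=\frac{\sigma_r^2}{2|c_4|^2L\,P\tau\,\|\mathbf{c}'\|^2|\alpha|^2N},\qquad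 \|\mathbf{c}'\|^2=\frac{\pi^2\cos^2(\phi)N_e(N_e^2-1)}{12}.$$ Moreover, if $\phi\sim\mathcal{U}(-\pi/2,\pi/2)$ then for $\epsilon>0$, with $u(\epsilon)=\sqrt6\,\sigma_r\big(\epsilon N_eN\pi^2LP|c_4|^2|\alpha|^2\tau(N_e^2-1)\big)^{-1/2}$, $P(\mathrm{CRB}(\phi)>\epsilon)=\frac2\pi\sin^{-1}(u(\epsilon))$ if $u(\epsilon)<1$, and $=1$ otherwise.
   Context: $j=\sqrt{-1}$. $\mathbf{a}(\theta)\in\mathbb{C}^N$ has $i$-th entry $e^{-j\pi\sin(\theta)\frac{N-(2i-1)}{2}}$; $\mathbf{c}(\phi)\in\mathbb{C}^{N_e}$ has $i$-th entry $e^{-j\pi\sin(\phi)\frac{N_e-(2i-1)}{2}}$ and $\mathbf{c}'=\partial\mathbf{c}/\partial\phi$. $\mathrm{CRB}(\phi)$ is the Cramér–Rao bound of a strong sensing eavesdropper (one knowing the transmitted signal) for the target angle $\phi$, under the SSJB precoding scheme with transmit covariance $\mathbf{R}_x$. *)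

theory Defs
  imports "HOL-Probability.Probability"
begin

text \<open>Vectors in C^M are represented as functions nat => complex, indexed by 1..M.\<close>

definition steer :: "nat \<Rightarrow> real \<Rightarrow> nat \<Rightarrow> complex" where
  "steer M x i = exp (- \<i> * complex_of_real (pi * sin x * (real M - (2 * real i - 1)) / 2))"

definition avec :: "nat \<Rightarrow> real \<Rightarrow> nat \<Rightarrow> complex" where
  "avec N \<theta> = steer N \<theta>"

definition cvec :: "nat \<Rightarrow> real \<Rightarrow> nat \<Rightarrow> complex" where
  "cvec Ne \<phi> = steer Ne \<phi>"

definition cder :: "nat \<Rightarrow> real \<Rightarrow> nat \<Rightarrow> complex" where
  "cder Ne \<phi> i = vector_derivative (\<lambda>x. cvec Ne x i) (at \<phi>)"

definition cinner :: "nat \<Rightarrow> (nat \<Rightarrow> complex) \<Rightarrow> (nat \<Rightarrow> complex) \<Rightarrow> complex" where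
  "cinner M u v = (\<Sum>i=1..M. cnj (u i) * v i)"

definition vnorm :: "nat \<Rightarrow> (nat \<Rightarrow> complex) \<Rightarrow> real" where
  "vnorm M v = sqrt (\<Sum>i=1..M. (cmod (v i))^2)"

definition atil :: "nat \<Rightarrow> real \<Rightarrow> nat \<Rightarrow> complex" where
  "atil N \<theta> = (\<lambda>i. avec N \<theta> i / complex_of_real (vnorm N (avec N \<theta>)))"

definition htil :: "nat \<Rightarrow> real \<Rightarrow> (nat \<Rightarrow> complex) \<Rightarrow> nat \<Rightarrow> complex" where
  "htil N \<theta> h =
     (let w = (\<lambda>i. h i - cinner N (atil N \<theta>) h * atil N \<theta> i)
      in (\<lambda>i. w i / complex_of_real (vnorm N w)))"

definition t1vec :: "nat \<Rightarrow> complex \<Rightarrow> complex \<Rightarrow> real \<Rightarrow> (nat \<Rightarrow> complex) \<Rightarrow> nat \<Rightarrow> complex" where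
  "t1vec N \<alpha> \<beta> \<theta> h = (\<lambda>i. \<alpha> * atil N \<theta> i + \<beta> * htil N \<theta> h i)"

definition Rx :: "nat \<Rightarrow> real \<Rightarrow> real \<Rightarrow> complex \<Rightarrow> complex \<Rightarrow> real \<Rightarrow> (nat \<Rightarrow> complex)
                  \<Rightarrow> (nat \<Rightarrow> nat \<Rightarrow> complex) \<Rightarrow> nat \<Rightarrow> nat \<Rightarrow> complex" where
  "Rx N P \<tau> \<alpha> \<beta> \<theta> h t = (\<lambda>i k.
      complex_of_real (P * \<tau>) * t1vec N \<alpha> \<beta> \<theta> h i * cnj (t1vec N \<alpha> \<beta> \<theta> h k)
    + complex_of_real ((1 - \<tau>) * P / (real N - 2)) * (\<Sum>m=3..N. t m i * cnj (t m k)))"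

definition qform :: "nat \<Rightarrow> (nat \<Rightarrow> nat \<Rightarrow> complex) \<Rightarrow> (nat \<Rightarrow> complex) \<Rightarrow> complex" where
  "qform M R v = (\<Sum>i=1..M. \<Sum>k=1..M. cnj (v i) * R i k * v k)"

text \<open>CRB(phi); a^H R_x a is real (R_x Hermitian), its real part is taken.\<close>
definition CRB :: "nat \<Rightarrow> nat \<Rightarrow> nat \<Rightarrow> real \<Rightarrow> real \<Rightarrow> real \<Rightarrow> complex \<Rightarrow> complex \<Rightarrow> complex
                   \<Rightarrow> real \<Rightarrow> (nat \<Rightarrow> complex) \<Rightarrow> (nat \<Rightarrow> nat \<Rightarrow> complex) \<Rightarrow> real \<Rightarrow> real" where
  "CRB N Ne L P \<tau> \<sigma>r c4 \<alpha> \<beta> \<theta> h t \<phi> =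
     \<sigma>r^2 / (2 * (cmod c4)^2 * real L * (vnorm Ne (cder Ne \<phi>))^2
              * Re (qform N (Rx N P \<tau> \<alpha> \<beta> \<theta> h t) (avec N \<theta>)))"

end

theory Submission
  imports Defs
begin

text \<open>
  The steering vector \<open>a\<close> is orthogonal to \<open>h\<^sup>~\<close> and to every \<open>t\<^sub>m\<close>, so in
  \<open>a\<^sup>H R\<^sub>x a\<close> only the beam \<open>t\<^sub>1\<close> survives, and \<open>a\<^sup>H t\<^sub>1 = \<alpha> a\<^sup>H a\<^sup>~ = \<alpha> sqrt N\<close> gives
  \<open>a\<^sup>H R\<^sub>x a = P \<tau> |\<alpha>|\<^sup>2 N\<close>. Differentiating the phases of \<open>c\<close> gives
  \<open>|c'\<^sub>i| = \<pi> cos \<phi> |N\<^sub>e - (2i - 1)| / 2\<close>, and summing the squares of these centred odd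
  numbers yields \<open>\<parallel>c'\<parallel>\<^sup>2\<close>. Hence \<open>CRB(\<phi>) = 6 \<sigma>\<^sub>r\<^sup>2 / (D cos\<^sup>2 \<phi>)\<close> for a constant \<open>D > 0\<close>,
  so \<open>CRB(\<phi>) > \<epsilon>\<close> iff \<open>cos \<phi> < u(\<epsilon>)\<close>; for \<open>u < 1\<close> this happens outside
  \<open>[-arccos u, arccos u]\<close>, a set of uniform probability \<open>1 - 2 arccos u / \<pi> = 2 arcsin u / \<pi>\<close>.
\<close>

lemma cmod_steer [simp]: "cmod (steer M x i) = 1"
  unfolding steer_def by (simp add: norm_exp_eq_Re)

lemma steer_has_vector_derivative:
  "((\<lambda>x. steer M x i) has_vector_derivative
     - \<i> * complex_of_real (pi * cos x * (real M - (2 * real i - 1)) / 2) * steer M x i) (at x)"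
proof -
  define k where "k = real M - (2 * real i - 1)"
  have phase: "((\<lambda>x. complex_of_real (pi * sin x * k / 2)) has_vector_derivative
                 complex_of_real (pi * cos x * k / 2)) (at x)"
    by (rule has_vector_derivative_of_real) (auto intro!: derivative_eq_intros)
  have exp: "((\<lambda>z. exp (- \<i> * z)) has_field_derivative - \<i> * exp (- \<i> * z)) (at z)" for z
    by (auto intro!: derivative_eq_intros)
  have "(\<lambda>x. steer M x i) = (\<lambda>z. exp (- \<i> * z)) \<circ> (\<lambda>x. complex_of_real (pi * sin x * k / 2))"
    by (simp add: fun_eq_iff steer_def k_def)
  then show ?thesis
    using field_vector_diff_chain_at[OF phase exp] by (simp add: steer_def k_def ac_simps)
qed

lemma cder_eq:
  "cder Ne \<phi> i = - \<i> * complex_of_real (pi * cos \<phi> * (real Ne - (2 * real i - 1)) / 2) * cvec Ne \<phi> i"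
  unfolding cder_def cvec_def by (rule vector_derivative_at[OF steer_has_vector_derivative])

lemma sum_centered_odd_squares:
  "(\<Sum>i=1..n. (real n - (2 * real i - 1))\<^sup>2) = real n * ((real n)\<^sup>2 - 1) / 3"
proof -
  have sum_id: "(\<Sum>i=1..n. real i) = real n * (real n + 1) / 2" for n
    by (induction n) (auto simp: field_simps)
  have sum_squares: "(\<Sum>i=1..n. (real i)\<^sup>2) = real n * (real n + 1) * (2 * real n + 1) / 6" for n
    by (induction n) (auto simp: field_simps power2_eq_square)
  have "(\<Sum>i=1..n. (real n - (2 * real i - 1))\<^sup>2) =
        (\<Sum>i=1..n. (real n + 1)\<^sup>2 - 4 * (real n + 1) * real i + 4 * (real i)\<^sup>2)"
    by (rule sum.cong) (auto simp: power2_eq_square algebra_simps)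
  also have "\<dots> = real n * (real n + 1)\<^sup>2 - 4 * (real n + 1) * (\<Sum>i=1..n. real i)
                  + 4 * (\<Sum>i=1..n. (real i)\<^sup>2)"
    by (simp add: sum.distrib sum_subtractf sum_distrib_left)
  also have "\<dots> = real n * ((real n)\<^sup>2 - 1) / 3"
    unfolding sum_id sum_squares by (simp add: field_simps power2_eq_square)
  finally show ?thesis .
qed

lemma vnorm_cder_squared:
  "(vnorm Ne (cder Ne \<phi>))\<^sup>2 = pi\<^sup>2 * (cos \<phi>)\<^sup>2 * real Ne * ((real Ne)\<^sup>2 - 1) / 12"
proof -
  have entry: "(cmod (cder Ne \<phi> i))\<^sup>2 = pi\<^sup>2 * (cos \<phi>)\<^sup>2 / 4 * (real Ne - (2 * real i - 1))\<^sup>2" for i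
    unfolding cder_eq norm_mult norm_of_real cvec_def
    by (simp add: power_mult_distrib power_divide)
  have "(vnorm Ne (cder Ne \<phi>))\<^sup>2 = (\<Sum>i=1..Ne. (cmod (cder Ne \<phi> i))\<^sup>2)"
    unfolding vnorm_def by (simp add: sum_nonneg)
  also have "\<dots> = pi\<^sup>2 * (cos \<phi>)\<^sup>2 / 4 * (\<Sum>i=1..Ne. (real Ne - (2 * real i - 1))\<^sup>2)"
    unfolding entry sum_distrib_left ..
  finally show ?thesis
    unfolding sum_centered_odd_squares by simp
qed

lemma vnorm_steer: "vnorm M (steer M x) = sqrt (real M)"
  unfolding vnorm_def by simp

lemma cinner_steer_self: "cinner M (steer M x) (steer M x) = of_nat M"
proof -
  have "cnj (steer M x i) * steer M x i = 1" for i
    using complex_norm_square[of "steer M x i"] by (simp add: mult.commute)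
  then show ?thesis
    unfolding cinner_def by simp
qed

lemma cinner_divide_left:
  "cinner M (\<lambda>i. u i / complex_of_real r) v = cinner M u v / complex_of_real r"
  unfolding cinner_def by (simp add: sum_divide_distrib)

lemma cinner_divide_right: "cinner M u (\<lambda>i. v i / c) = cinner M u v / c"
  unfolding cinner_def by (simp add: sum_divide_distrib)

lemma cinner_lincomb_right:
  "cinner M u (\<lambda>i. a * v i + b * w i) = a * cinner M u v + b * cinner M u w"
  unfolding cinner_def by (simp add: algebra_simps sum.distrib sum_distrib_left)

lemma cinner_diff_scaled_right:
  "cinner M u (\<lambda>i. v i - b * w i) = cinner M u v - b * cinner M u w"
  unfolding cinner_def by (simp add: algebra_simps sum_subtractf sum_distrib_left)

lemma cnj_cinner: "cnj (cinner M v x) = (\<Sum>k=1..M. cnj (x k) * v k)"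
  unfolding cinner_def by (simp add: mult.commute)

lemma qform_rank_one_plus_sum:
  "qform M (\<lambda>i k. c1 * x i * cnj (x k) + c2 * (\<Sum>m\<in>S. y m i * cnj (y m k))) v =
   c1 * (cinner M v x * cnj (cinner M v x))
   + c2 * (\<Sum>m\<in>S. cinner M v (y m) * cnj (cinner M v (y m)))"
proof -
  have "qform M (\<lambda>i k. c1 * x i * cnj (x k) + c2 * (\<Sum>m\<in>S. y m i * cnj (y m k))) v =
        (\<Sum>i=1..M. \<Sum>k=1..M. c1 * ((cnj (v i) * x i) * (cnj (x k) * v k))
           + c2 * (\<Sum>m\<in>S. (cnj (v i) * y m i) * (cnj (y m k) * v k)))"
    unfolding qform_def
    by (intro sum.cong refl) (simp add: algebra_simps sum_distrib_left sum_distrib_right)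
  also have "\<dots> = c1 * (\<Sum>i=1..M. \<Sum>k=1..M. (cnj (v i) * x i) * (cnj (x k) * v k))
      + c2 * (\<Sum>m\<in>S. \<Sum>i=1..M. \<Sum>k=1..M. (cnj (v i) * y m i) * (cnj (y m k) * v k))"
    by (simp add: sum.distrib sum_distrib_left sum.swap[of _ S])
  also have "\<dots> = c1 * (cinner M v x * cnj (cinner M v x))
      + c2 * (\<Sum>m\<in>S. cinner M v (y m) * cnj (cinner M v (y m)))"
    unfolding cnj_cinner by (simp add: cinner_def sum_product)
  finally show ?thesis .
qed

lemma cinner_atil_left:
  "cinner N (atil N \<theta>) v = cinner N (avec N \<theta>) v / of_real (sqrt (real N))"
  unfolding atil_def avec_def vnorm_steer cinner_divide_left ..

lemma cinner_avec_atil: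
  assumes "N > 0"
  shows "cinner N (avec N \<theta>) (atil N \<theta>) = of_real (sqrt (real N))"
proof -
  have "cinner N (avec N \<theta>) (atil N \<theta>) = of_nat N / of_real (sqrt (real N))"
    unfolding atil_def avec_def vnorm_steer cinner_divide_right cinner_steer_self ..
  also have "\<dots> = of_real (sqrt (real N))"
    using assms by (simp add: field_simps flip: of_real_mult)
  finally show ?thesis .
qed

text \<open>No hypothesis on \<open>h\<close> is needed: if \<open>h\<close> lies in the span of \<open>a\<close>, the normalisation
  divides by zero and \<open>htil\<close> is the zero vector.\<close>

lemma cinner_avec_htil:
  assumes "N > 0"
  shows "cinner N (avec N \<theta>) (htil N \<theta> h) = 0"
proof -
  have "cinner N (avec N \<theta>) (\<lambda>i. h i - cinner N (atil N \<theta>) h * atil N \<theta> i) = 0"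
    unfolding cinner_diff_scaled_right cinner_avec_atil[OF assms] cinner_atil_left
    using assms by simp
  then show ?thesis
    unfolding htil_def Let_def cinner_divide_right by simp
qed

lemma cinner_avec_t1vec:
  assumes "N > 0"
  shows "cinner N (avec N \<theta>) (t1vec N \<alpha> \<beta> \<theta> h) = \<alpha> * of_real (sqrt (real N))"
  unfolding t1vec_def cinner_lincomb_right cinner_avec_atil[OF assms] cinner_avec_htil[OF assms]
  by simp

lemma qform_Rx_avec:
  assumes "N > 0" and t_orth: "\<forall>m\<in>{3..N}. cinner N (atil N \<theta>) (t m) = 0"
  shows "qform N (Rx N P \<tau> \<alpha> \<beta> \<theta> h t) (avec N \<theta>) = of_real (P * \<tau> * (cmod \<alpha>)\<^sup>2 * real N)"
proof -
  have avec_t: "cinner N (avec N \<theta>) (t m) = 0" if "m \<in> {3..N}" for m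
    using t_orth that assms(1) unfolding cinner_atil_left by simp
  have "qform N (Rx N P \<tau> \<alpha> \<beta> \<theta> h t) (avec N \<theta>) =
        of_real (P * \<tau>) * ((\<alpha> * of_real (sqrt (real N))) * cnj (\<alpha> * of_real (sqrt (real N))))"
    unfolding Rx_def qform_rank_one_plus_sum cinner_avec_t1vec[OF assms(1)]
    by (simp add: avec_t)
  also have "\<dots> = of_real (P * \<tau>) * ((\<alpha> * cnj \<alpha>) * of_real (real N))"
    using assms(1) by (simp add: algebra_simps flip: of_real_mult)
  also have "\<dots> = of_real (P * \<tau> * (cmod \<alpha>)\<^sup>2 * real N)"
    by (simp only: complex_norm_square[symmetric] of_real_mult mult.assoc)
  finally show ?thesis .
qed

lemma CRB_closed_form:
  assumes "N > 0" and "\<forall>m\<in>{3..N}. cinner N (atil N \<theta>) (t m) = 0"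
  shows "CRB N Ne L P \<tau> \<sigma>r c4 \<alpha> \<beta> \<theta> h t \<phi> =
         \<sigma>r\<^sup>2 / (2 * (cmod c4)\<^sup>2 * real L * P * \<tau> * (vnorm Ne (cder Ne \<phi>))\<^sup>2 * (cmod \<alpha>)\<^sup>2 * real N)"
  unfolding CRB_def qform_Rx_avec[OF assms] by (simp add: ac_simps)

lemma less_divide_cos_squared_iff:
  fixes \<epsilon> s D c :: real
  assumes "0 < \<epsilon>" "0 < D" "0 < c" "0 \<le> s"
  shows "\<epsilon> < s\<^sup>2 / (D * c\<^sup>2) \<longleftrightarrow> c < s / sqrt (\<epsilon> * D)"
proof -
  have "\<epsilon> < s\<^sup>2 / (D * c\<^sup>2) \<longleftrightarrow> c\<^sup>2 < s\<^sup>2 / (\<epsilon> * D)"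
    using assms by (simp add: field_simps)
  also have "\<dots> \<longleftrightarrow> sqrt (c\<^sup>2) < sqrt (s\<^sup>2 / (\<epsilon> * D))"
    by (rule real_sqrt_less_iff[symmetric])
  also have "\<dots> \<longleftrightarrow> c < s / sqrt (\<epsilon> * D)"
    using assms by (simp add: real_sqrt_divide)
  finally show ?thesis .
qed

lemma cos_less_cos_iff_abs:
  assumes "\<phi> \<in> {-pi/2<..<pi/2}" "0 \<le> a" "a \<le> pi"
  shows "cos \<phi> < cos a \<longleftrightarrow> a < \<bar>\<phi>\<bar>"
proof -
  have "cos \<phi> = cos \<bar>\<phi>\<bar>" "\<bar>\<phi>\<bar> \<le> pi"
    using assms(1) by auto
  then show ?thesis
    using cos_mono_less_eq[of "\<bar>\<phi>\<bar>" a] assms by simp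
qed

lemma cos_less_set_eq_arccos:
  assumes "0 < u" "u < 1"
  shows "{\<phi> \<in> {-pi/2<..<pi/2}. cos \<phi> < u} = {-pi/2<..<- arccos u} \<union> {arccos u<..<pi/2}"
proof -
  have "0 < arccos u" "arccos u < pi/2"
    using assms arccos_lt_bounded[of u] arccos_less_arccos[of 0 u] by auto
  moreover have "cos (arccos u) = u"
    using assms by simp
  ultimately have "x \<in> {\<phi> \<in> {-pi/2<..<pi/2}. cos \<phi> < u} \<longleftrightarrow>
                  x \<in> {-pi/2<..<- arccos u} \<union> {arccos u<..<pi/2}" for x
    using cos_less_cos_iff_abs[of x "arccos u"] by (cases "x \<in> {-pi/2<..<pi/2}") auto
  then show ?thesis
    by blast
qed

lemma uniform_measure_cos_less:
  assumes "0 < u"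
  shows "measure (uniform_measure lborel {-pi/2<..<pi/2}) {\<phi> \<in> {-pi/2<..<pi/2}. cos \<phi> < u}
         = (if u < 1 then 2 / pi * arcsin u else 1)"
proof -
  let ?S = "{-pi/2<..<pi/2::real}"
  let ?A = "{\<phi> \<in> ?S. cos \<phi> < u}"
  have "?A \<in> sets lborel"
    by measurable
  then have "measure (uniform_measure lborel ?S) ?A = measure lborel (?S \<inter> ?A) / measure lborel ?S"
    by (intro measure_uniform_measure) auto
  also have "?S \<inter> ?A = ?A"
    by auto
  finally have uniform: "measure (uniform_measure lborel ?S) ?A = measure lborel ?A / pi"
    by simp
  show ?thesis
  proof (cases "u < 1")
    case True
    have "0 < arccos u" "arccos u < pi/2"
      using assms True arccos_lt_bounded[of u] arccos_less_arccos[of 0 u] by auto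
    then have "measure lborel ?A = pi - 2 * arccos u"
      unfolding cos_less_set_eq_arccos[OF assms True] by (subst measure_Union) auto
    then show ?thesis
      using uniform assms True by (simp add: arccos_arcsin_eq field_simps)
  next
    case False
    have "{\<phi> \<in> ?S. \<not> cos \<phi> < u} \<subseteq> {0}"
      using False cos_less_cos_iff_abs[of _ 0] by force
    then have "{\<phi> \<in> ?S. \<not> cos \<phi> < u} \<in> null_sets lborel"
      by (meson countable_imp_null_set_lborel countable_subset countable_finite finite.intros)
    then have "measure lborel (?S - {\<phi> \<in> ?S. \<not> cos \<phi> < u}) = measure lborel ?S"
      by (intro measure_Diff_null_set) auto
    moreover have "?S - {\<phi> \<in> ?S. \<not> cos \<phi> < u} = ?A"
      by blast
    ultimately show ?thesis
      using uniform False by simp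
  qed
qed

definition crb_scale :: "nat \<Rightarrow> nat \<Rightarrow> nat \<Rightarrow> real \<Rightarrow> real \<Rightarrow> complex \<Rightarrow> complex \<Rightarrow> real" where
  "crb_scale N Ne L P \<tau> c4 \<alpha> =
     real Ne * real N * pi\<^sup>2 * real L * P * (cmod c4)\<^sup>2 * (cmod \<alpha>)\<^sup>2 * \<tau> * ((real Ne)\<^sup>2 - 1)"

lemma crb_scale_pos:
  assumes "N > 0" "Ne \<ge> 2" "L \<ge> 1" "P > 0" "\<tau> > 0" "c4 \<noteq> 0" "\<alpha> \<noteq> 0"
  shows "crb_scale N Ne L P \<tau> c4 \<alpha> > 0"
proof -
  have "(real Ne)\<^sup>2 > 1"
    using assms(2) by (intro one_less_power) auto
  then show ?thesis
    unfolding crb_scale_def using assms by (simp add: zero_less_mult_iff)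
qed

lemma CRB_eq_cos_squared:
  assumes "N > 0" and "\<forall>m\<in>{3..N}. cinner N (atil N \<theta>) (t m) = 0"
  shows "CRB N Ne L P \<tau> \<sigma>r c4 \<alpha> \<beta> \<theta> h t \<phi> =
         (sqrt 6 * \<sigma>r)\<^sup>2 / (crb_scale N Ne L P \<tau> c4 \<alpha> * (cos \<phi>)\<^sup>2)"
proof -
  have "2 * (cmod c4)\<^sup>2 * real L * P * \<tau> * (pi\<^sup>2 * (cos \<phi>)\<^sup>2 * real Ne * ((real Ne)\<^sup>2 - 1) / 12)
        * (cmod \<alpha>)\<^sup>2 * real N = crb_scale N Ne L P \<tau> c4 \<alpha> * (cos \<phi>)\<^sup>2 / 6"
    unfolding crb_scale_def by (simp add: field_simps)
  then show ?thesis
    unfolding CRB_closed_form[OF assms] vnorm_cder_squared by (simp only:) (simp add: power_mult_distrib)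
qed

lemma CRB_exceedance_set:
  assumes "N > 0" and "\<forall>m\<in>{3..N}. cinner N (atil N \<theta>) (t m) = 0"
    and "\<epsilon> > 0" "\<sigma>r \<ge> 0" "crb_scale N Ne L P \<tau> c4 \<alpha> > 0"
  shows "{\<phi> \<in> {-pi/2<..<pi/2}. CRB N Ne L P \<tau> \<sigma>r c4 \<alpha> \<beta> \<theta> h t \<phi> > \<epsilon>} =
         {\<phi> \<in> {-pi/2<..<pi/2}. cos \<phi> < sqrt 6 * \<sigma>r / sqrt (\<epsilon> * crb_scale N Ne L P \<tau> c4 \<alpha>)}"
proof -
  have "cos \<phi> > 0" if "\<phi> \<in> {-pi/2<..<pi/2}" for \<phi>
    using that by (auto intro: cos_gt_zero_pi)
  then show ?thesis
    unfolding CRB_eq_cos_squared[OF assms(1,2)]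
    using less_divide_cos_squared_iff[OF assms(3,5)] assms(4) by auto
qed

theorem lemma4:
  fixes N Ne L :: nat and P \<tau> \<sigma>r \<theta> :: real and c4 \<alpha> \<beta> :: complex
    and h :: "nat \<Rightarrow> complex" and t :: "nat \<Rightarrow> nat \<Rightarrow> complex"
  assumes "N \<ge> 3" and "Ne \<ge> 2" and "L \<ge> 1"
    and "P > 0" and "0 < \<tau>" and "\<tau> < 1" and "\<sigma>r > 0"
    and "c4 \<noteq> 0"
    and "(cmod \<alpha>)^2 + (cmod \<beta>)^2 = 1" and "\<alpha> \<noteq> 0"
    and "-pi/2 < \<theta>" and "\<theta> < pi/2"
    and h_notin_span: "\<forall>z. \<exists>i\<in>{1..N}. h i \<noteq> z * avec N \<theta> i"
    and t_orthonormal: "\<forall>m\<in>{3..N}. \<forall>m'\<in>{3..N}.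
                          cinner N (t m) (t m') = (if m = m' then 1 else 0)"
    and t_orth: "\<forall>m\<in>{3..N}. cinner N (atil N \<theta>) (t m) = 0 \<and> cinner N (htil N \<theta> h) (t m) = 0"
    and t_span: "\<forall>v. cinner N (atil N \<theta>) v = 0 \<and> cinner N (htil N \<theta> h) v = 0 \<longrightarrow>
                    (\<exists>co. \<forall>i\<in>{1..N}. v i = (\<Sum>m=3..N. co m * t m i))"
  shows "(\<forall>\<phi>. -pi/2 < \<phi> \<and> \<phi> < pi/2 \<longrightarrow>
            CRB N Ne L P \<tau> \<sigma>r c4 \<alpha> \<beta> \<theta> h t \<phi> =
              \<sigma>r^2 / (2 * (cmod c4)^2 * real L * P * \<tau> * (vnorm Ne (cder Ne \<phi>))^2
                       * (cmod \<alpha>)^2 * real N)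
          \<and> (vnorm Ne (cder Ne \<phi>))^2 = pi^2 * (cos \<phi>)^2 * real Ne * ((real Ne)^2 - 1) / 12)
       \<and> (\<forall>\<epsilon>>0.
            let u = sqrt 6 * \<sigma>r / sqrt (\<epsilon> * real Ne * real N * pi^2 * real L * P * (cmod c4)^2
                                        * (cmod \<alpha>)^2 * \<tau> * ((real Ne)^2 - 1))
            in measure (uniform_measure lborel {-pi/2<..<pi/2})
                 {\<phi> \<in> {-pi/2<..<pi/2}. CRB N Ne L P \<tau> \<sigma>r c4 \<alpha> \<beta> \<theta> h t \<phi> > \<epsilon>}
               = (if u < 1 then 2 / pi * arcsin u else 1))"
proof -
  have N_pos: "N > 0" and t_orth_atil: "\<forall>m\<in>{3..N}. cinner N (atil N \<theta>) (t m) = 0"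
    using assms(1) t_orth by auto
  have scale_pos: "crb_scale N Ne L P \<tau> c4 \<alpha> > 0"
    using assms by (intro crb_scale_pos) auto
  have exceedance_probability:
    "let u = sqrt 6 * \<sigma>r / sqrt (\<epsilon> * crb_scale N Ne L P \<tau> c4 \<alpha>)
     in measure (uniform_measure lborel {-pi/2<..<pi/2})
          {\<phi> \<in> {-pi/2<..<pi/2}. CRB N Ne L P \<tau> \<sigma>r c4 \<alpha> \<beta> \<theta> h t \<phi> > \<epsilon>}
        = (if u < 1 then 2 / pi * arcsin u else 1)" if "\<epsilon> > 0" for \<epsilon>
    using that scale_pos \<open>\<sigma>r > 0\<close>
    unfolding Let_def CRB_exceedance_set[OF N_pos t_orth_atil that less_imp_le[OF \<open>\<sigma>r > 0\<close>] scale_pos]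
    by (intro uniform_measure_cos_less) simp
  have "\<epsilon> * real Ne * real N * pi^2 * real L * P * (cmod c4)^2 * (cmod \<alpha>)^2 * \<tau> * ((real Ne)^2 - 1)
        = \<epsilon> * crb_scale N Ne L P \<tau> c4 \<alpha>" for \<epsilon>
    unfolding crb_scale_def by (simp add: ac_simps)
  then show ?thesis
    using CRB_closed_form[OF N_pos t_orth_atil] vnorm_cder_squared exceedance_probability
    by (simp only:) blast
qed

end
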